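(* Let $A$ be a unital C*-algebra that admits a unital $*$-homomorphism $Z_{2,3}\to A$. Then $\xi(A)\leq6$. This applies in particular to all unital $\mathcal{Z}$-stable C*-algebras (unital C*-algebras $A$ with $A\cong A\otimes\mathcal{Z}$, where $\mathcal{Z}$ is the Jiang–Su algebra).
   Context: The dimension drop algebra is $Z_{2,3}=\{f\colon[0,1]\to M_2(\mathbb{C})\otimes M_3(\mathbb{C})\text{ continuous}: f(0)\in M_2(\mathbb{C})\otimes 1,\ f(1)\in 1\otimes M_3(\mathbb{C})\}$. For a unital ring $T$ generated by its commutators, $\xi(T)$ is the minimal $N\in\mathbb{N}$ such that every element of $T$ is a sum of $N$ elements of the form $[b,c][d,e]$ with $b,c,d,e\in T$, where $[x,y]=xy-yx$. *)

theory Defs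
  imports "HOL-Analysis.Analysis" "HOL-Library.Numeral_Type"
begin

class unital_cstar_algebra = real_normed_algebra_1 + banach +
  fixes scaleC :: "complex \<Rightarrow> 'a \<Rightarrow> 'a"
    and cstar :: "'a \<Rightarrow> 'a"
  assumes scaleC_add_right: "scaleC c (x + y) = scaleC c x + scaleC c y"
    and scaleC_add_left: "scaleC (b + c) x = scaleC b x + scaleC c x"
    and scaleC_scaleC: "scaleC b (scaleC c x) = scaleC (b * c) x"
    and scaleC_one: "scaleC 1 x = x"
    and scaleC_of_real: "scaleC (complex_of_real r) x = scaleR r x"
    and mult_scaleC_left: "scaleC c x * y = scaleC c (x * y)"
    and mult_scaleC_right: "x * scaleC c y = scaleC c (x * y)"
    and norm_scaleC: "norm (scaleC c x) = cmod c * norm x"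
    and cstar_cstar: "cstar (cstar x) = x"
    and cstar_add: "cstar (x + y) = cstar x + cstar y"
    and cstar_scaleC: "cstar (scaleC c x) = scaleC (cnj c) (cstar x)"
    and cstar_mult: "cstar (x * y) = cstar y * cstar x"
    and cstar_identity: "norm (cstar x * x) = (norm x)\<^sup>2"

definition commutator :: "'a::ring \<Rightarrow> 'a \<Rightarrow> 'a" where
  "commutator x y = x * y - y * x"

definition sum_of_comm_prods :: "nat \<Rightarrow> 'a::ring \<Rightarrow> bool" where
  "sum_of_comm_prods N a \<longleftrightarrow>
     (\<exists>b c d e :: nat \<Rightarrow> 'a.
        a = (\<Sum>i<N. commutator (b i) (c i) * commutator (d i) (e i)))"

definition xi :: "'a::ring_1 itself \<Rightarrow> nat" where
  "xi _ = (LEAST N. \<forall>a::'a. sum_of_comm_prods N a)"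

text \<open>M_2(C) \<otimes> M_3(C) is identified with matrices indexed by 2 \<times> 3.\<close>
type_synonym mat6 = "complex ^ (2 \<times> 3) ^ (2 \<times> 3)"

definition kron :: "complex ^ 2 ^ 2 \<Rightarrow> complex ^ 3 ^ 3 \<Rightarrow> mat6" where
  "kron a b = (\<chi> p q. a $ fst p $ fst q * b $ snd p $ snd q)"

definition madj :: "mat6 \<Rightarrow> mat6" where
  "madj M = (\<chi> p q. cnj (M $ q $ p))"

definition mscale :: "complex \<Rightarrow> mat6 \<Rightarrow> mat6" where
  "mscale c M = (\<chi> p q. c * M $ p $ q)"

text \<open>Elements of Z_{2,3} are continuous functions on [0,1]; to represent them
  extensionally as total functions real => mat6 we require value 0 outside [0,1].\<close>
definition Z23 :: "(real \<Rightarrow> mat6) set" where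
  "Z23 = {f. continuous_on {0..1} f \<and> (\<forall>t. t \<notin> {0..1} \<longrightarrow> f t = 0)
            \<and> (\<exists>a. f 0 = kron a (mat 1)) \<and> (\<exists>b. f 1 = kron (mat 1) b)}"

definition Z23_one :: "real \<Rightarrow> mat6" where
  "Z23_one t = (if t \<in> {0..1} then mat 1 else 0)"

definition unital_star_hom_Z23 :: "((real \<Rightarrow> mat6) \<Rightarrow> 'a::unital_cstar_algebra) \<Rightarrow> bool" where
  "unital_star_hom_Z23 \<phi> \<longleftrightarrow>
     (\<forall>f\<in>Z23. \<forall>g\<in>Z23. \<phi> (\<lambda>t. f t + g t) = \<phi> f + \<phi> g) \<and>
     (\<forall>f\<in>Z23. \<forall>g\<in>Z23. \<phi> (\<lambda>t. f t ** g t) = \<phi> f * \<phi> g) \<and>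
     (\<forall>c. \<forall>f\<in>Z23. \<phi> (\<lambda>t. mscale c (f t)) = scaleC c (\<phi> f)) \<and>
     (\<forall>f\<in>Z23. \<phi> (\<lambda>t. madj (f t)) = cstar (\<phi> f)) \<and>
     \<phi> Z23_one = 1"

end

theory Submission
  imports Defs
begin

(* If 1 = sum_i [b_i, c_i] p_i y_i with [b_i, c_i] y_i = 0, then every a equals
   sum_i [b_i, c_i] [p_i, y_i a].  In Z_{2,3} such a decomposition of 1 comes from matrix
   units: for r ~= s we have e_rs e_rr = 0, so [g e_rr, g e_rs] = g^2 e_rs, whence
   [g e_rr, g e_rs] (g e_rr) = 0 and [g e_rr, g e_rs] (g' e_sr) (g e_rr) = g^3 g' e_rr.
   Summing over r in the corner M_2 (x) 1 (functions vanishing at 1) and in 1 (x) M_3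
   (functions vanishing at 0) gives 1 as soon as the two scalar functions g^3 g' form a
   partition of unity on [0,1].  The image under the unital homomorphism is then a
   decomposition of 1 in A with 2 + 3 terms, so in fact xi(A) <= 5. *)

definition annihilated_commutator_sum :: "'i set \<Rightarrow> 'a::ring \<Rightarrow> bool" where
  "annihilated_commutator_sum I x \<longleftrightarrow>
     (\<exists>b c p y. (\<forall>i\<in>I. commutator (b i) (c i) * y i = 0) \<and>
        x = (\<Sum>i\<in>I. commutator (b i) (c i) * p i * y i))"

lemma annihilated_commutator_sum_Plus:
  assumes "finite I" "finite J"
    and "annihilated_commutator_sum I x" "annihilated_commutator_sum J z"
  shows "annihilated_commutator_sum (I <+> J) (x + z)"
proof -
  obtain b c p y where I: "\<forall>i\<in>I. commutator (b i) (c i) * y i = 0"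
    "x = (\<Sum>i\<in>I. commutator (b i) (c i) * p i * y i)"
    using assms(3) unfolding annihilated_commutator_sum_def by blast
  obtain b' c' p' y' where J: "\<forall>j\<in>J. commutator (b' j) (c' j) * y' j = 0"
    "z = (\<Sum>j\<in>J. commutator (b' j) (c' j) * p' j * y' j)"
    using assms(4) unfolding annihilated_commutator_sum_def by blast
  show ?thesis
    unfolding annihilated_commutator_sum_def
    by (rule exI[of _ "case_sum b b'"], rule exI[of _ "case_sum c c'"],
        rule exI[of _ "case_sum p p'"], rule exI[of _ "case_sum y y'"])
      (use I J in \<open>auto simp: sum.Plus[OF assms(1,2)] comp_def\<close>)
qed

lemma commutator_eq_mult_if_mult_eq_zero:
  fixes u v :: "'a::ring"
  assumes "v * u = 0"
  shows "commutator u v = u * v"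
  using assms by (simp add: commutator_def)

lemma sum_of_comm_prods_card:
  fixes a :: "'a::ring_1"
  assumes "finite I" and "annihilated_commutator_sum I (1::'a)"
  shows "sum_of_comm_prods (card I) a"
proof -
  obtain b c p y :: "_ \<Rightarrow> 'a" where ann: "\<forall>i\<in>I. commutator (b i) (c i) * y i = 0"
    and one: "1 = (\<Sum>i\<in>I. commutator (b i) (c i) * p i * y i)"
    using assms(2) unfolding annihilated_commutator_sum_def by blast
  have summand: "commutator (b i) (c i) * p i * y i * a
      = commutator (b i) (c i) * commutator (p i) (y i * a)" if "i \<in> I" for i
  proof -
    have "commutator (b i) (c i) * (y i * a * p i) = 0"
      using ann that by (metis mult.assoc mult_zero_left)
    then show ?thesis
      by (simp add: commutator_def right_diff_distrib mult.assoc)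
  qed
  obtain h where h: "bij_betw h {..<card I} I"
    using ex_bij_betw_nat_finite[OF assms(1)] by (auto simp: atLeast0LessThan)
  have "a = (\<Sum>i\<in>I. commutator (b i) (c i) * p i * y i * a)"
    by (metis one mult_1 sum_distrib_right)
  also have "\<dots> = (\<Sum>i\<in>I. commutator (b i) (c i) * commutator (p i) (y i * a))"
    using summand by (rule sum.cong[OF refl])
  also have "\<dots> = (\<Sum>k<card I.
      commutator (b (h k)) (c (h k)) * commutator (p (h k)) (y (h k) * a))"
    by (rule sum.reindex_bij_betw[OF h, symmetric])
  finally show ?thesis
    unfolding sum_of_comm_prods_def
    by (intro exI[of _ "b \<circ> h"] exI[of _ "c \<circ> h"] exI[of _ "p \<circ> h"]
        exI[of _ "\<lambda>k. y (h k) * a"]) simp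
qed

lemma ex_fixpoint_free_fun:
  assumes "CARD('n::finite) \<ge> 2"
  shows "\<exists>\<sigma> :: 'n \<Rightarrow> 'n. \<forall>r. \<sigma> r \<noteq> r"
proof -
  have "\<exists>s. s \<noteq> r" for r :: 'n
  proof (rule ccontr)
    assume "\<nexists>s. s \<noteq> r"
    then have "UNIV = {r}" by auto
    then have "CARD('n) = 1" by (auto simp: card_1_singleton_iff)
    with assms show False by simp
  qed
  then show ?thesis by metis
qed

definition matrix_unit :: "'n::finite \<Rightarrow> 'n \<Rightarrow> 'a::semiring_1^'n^'n" where
  "matrix_unit i j = (\<chi> p q. if p = i \<and> q = j then 1 else 0)"

lemma matrix_unit_mult:
  "matrix_unit i j ** matrix_unit k l = (if j = k then matrix_unit i l else 0)"
  by (auto simp: vec_eq_iff matrix_unit_def matrix_matrix_mult_def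
      if_distrib[where f="\<lambda>x. _ * x"] sum.delta cong: if_cong)

lemma sum_matrix_unit_diag: "(\<Sum>i\<in>UNIV. matrix_unit i i) = (mat 1 :: 'a::semiring_1^'n^'n)"
  by (auto simp: vec_eq_iff matrix_unit_def mat_def sum_component intro!: sum.neutral)

lemma kron_mult: "kron a b ** kron c d = kron (a ** c) (b ** d)"
proof -
  have "(\<Sum>k\<in>UNIV. a $ fst p $ fst k * b $ snd p $ snd k * (c $ fst k $ fst q * d $ snd k $ snd q))
     = (\<Sum>i\<in>UNIV. a $ fst p $ i * c $ i $ fst q) * (\<Sum>j\<in>UNIV. b $ snd p $ j * d $ j $ snd q)"
    for p q :: "2 \<times> 3"
    unfolding sum_product sum.cartesian_product UNIV_Times_UNIV[symmetric]
    by (rule sum.cong) (auto simp: ac_simps)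
  then show ?thesis
    by (simp add: vec_eq_iff kron_def matrix_matrix_mult_def)
qed

lemma kron_one: "kron (mat 1) (mat 1) = mat 1"
  by (auto simp: vec_eq_iff kron_def mat_def prod_eq_iff)

lemma additive_kron_left: "Modules.additive (\<lambda>a. kron a b)"
  by unfold_locales (simp add: vec_eq_iff kron_def algebra_simps)

lemma additive_kron_right: "Modules.additive (kron a)"
  by unfold_locales (simp add: vec_eq_iff kron_def algebra_simps)

lemma kron_zero_left: "kron 0 b = 0"
  by (rule additive.zero[OF additive_kron_left])

lemma kron_zero_right: "kron a 0 = 0"
  by (rule additive.zero[OF additive_kron_right])

lemma kron_scaleR_left: "c *\<^sub>R kron a b = kron (c *\<^sub>R a) b"
  by (simp add: vec_eq_iff kron_def vector_scaleR_component; simp add: scaleR_conv_of_real)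

lemma kron_scaleR_right: "c *\<^sub>R kron a b = kron a (c *\<^sub>R b)"
  by (simp add: vec_eq_iff kron_def vector_scaleR_component; simp add: scaleR_conv_of_real)

lemma scaleR_matrix_mult:
  "(c *\<^sub>R A) ** (d *\<^sub>R B) = (c * d) *\<^sub>R (A ** B :: complex^'n^'m)"
  by (simp add: vec_eq_iff matrix_matrix_mult_def vector_scaleR_component;
      simp add: scaleR_conv_of_real sum_distrib_left algebra_simps)

definition simple_tensor :: "(real \<Rightarrow> real) \<Rightarrow> mat6 \<Rightarrow> real \<Rightarrow> mat6" where
  "simple_tensor g M t = (if t \<in> {0..1} then g t *\<^sub>R M else 0)"

lemma simple_tensor_mult:
  "(\<lambda>t. simple_tensor g M t ** simple_tensor h N t) = simple_tensor (\<lambda>t. g t * h t) (M ** N)"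
  by (auto simp: simple_tensor_def scaleR_matrix_mult)

lemma simple_tensor_add:
  "(\<lambda>t. simple_tensor g M t + simple_tensor g N t) = simple_tensor g (M + N)"
  by (auto simp: simple_tensor_def scaleR_add_right)

lemma simple_tensor_add_fun:
  "(\<lambda>t. simple_tensor g M t + simple_tensor h M t) = simple_tensor (\<lambda>t. g t + h t) M"
  by (auto simp: simple_tensor_def scaleR_add_left)

lemma simple_tensor_zero: "simple_tensor g 0 = (\<lambda>t. 0)"
  by (auto simp: simple_tensor_def)

lemma Z23_one_eq_simple_tensor: "Z23_one = simple_tensor (\<lambda>t. 1) (mat 1)"
  by (auto simp: Z23_one_def simple_tensor_def)

lemma simple_tensor_in_Z23:
  assumes "continuous_on {0..1} g"
    and "\<exists>a. g 0 *\<^sub>R M = kron a (mat 1)" and "\<exists>b. g 1 *\<^sub>R M = kron (mat 1) b"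
  shows "simple_tensor g M \<in> Z23"
proof -
  have "continuous_on {0..1} (\<lambda>t. g t *\<^sub>R M)"
    by (intro continuous_intros assms(1))
  then have "continuous_on {0..1} (simple_tensor g M)"
    by (rule continuous_on_eq) (simp add: simple_tensor_def)
  moreover have "simple_tensor g M 0 = g 0 *\<^sub>R M" "simple_tensor g M 1 = g 1 *\<^sub>R M"
    by (simp_all add: simple_tensor_def)
  ultimately show ?thesis
    using assms(2,3) by (simp add: Z23_def simple_tensor_def)
qed

lemma simple_tensor_kron_left_in_Z23:
  assumes "continuous_on {0..1} g" and "g 1 = 0"
  shows "simple_tensor g (kron a (mat 1)) \<in> Z23"
  using assms by (intro simple_tensor_in_Z23)
    (auto simp: kron_scaleR_left, metis kron_zero_left kron_zero_right)

lemma simple_tensor_kron_right_in_Z23: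
  assumes "continuous_on {0..1} g" and "g 0 = 0"
  shows "simple_tensor g (kron (mat 1) b) \<in> Z23"
  using assms by (intro simple_tensor_in_Z23)
    (auto simp: kron_scaleR_right, metis kron_zero_left kron_zero_right)

locale unital_Z23_hom =
  fixes \<phi> :: "(real \<Rightarrow> mat6) \<Rightarrow> 'a::unital_cstar_algebra"
  assumes hom: "unital_star_hom_Z23 \<phi>"
begin

lemma add: "f \<in> Z23 \<Longrightarrow> g \<in> Z23 \<Longrightarrow> \<phi> (\<lambda>t. f t + g t) = \<phi> f + \<phi> g"
  using hom by (simp add: unital_star_hom_Z23_def)

lemma mult: "f \<in> Z23 \<Longrightarrow> g \<in> Z23 \<Longrightarrow> \<phi> (\<lambda>t. f t ** g t) = \<phi> f * \<phi> g"
  using hom by (simp add: unital_star_hom_Z23_def)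

lemma one: "\<phi> Z23_one = 1"
  using hom by (simp add: unital_star_hom_Z23_def)

lemma zero: "\<phi> (\<lambda>t. 0) = 0"
proof -
  have "(\<lambda>t. 0) \<in> Z23"
    using simple_tensor_kron_left_in_Z23[of "\<lambda>t. 0" 0]
    by (simp add: kron_zero_left simple_tensor_zero)
  from add[OF this this] show ?thesis
    by simp
qed

lemma annihilated_commutator_sum_corner:
  fixes E :: "complex^'n^'n \<Rightarrow> mat6" and G :: "(real \<Rightarrow> real) set"
  assumes "CARD('n) \<ge> 2"
    and E_mult: "\<And>A B. E A ** E B = E (A ** B)" and E_additive: "Modules.additive E"
    and G_Z23: "\<And>h A. h \<in> G \<Longrightarrow> simple_tensor h (E A) \<in> Z23"
    and G_mult: "\<And>h k. h \<in> G \<Longrightarrow> k \<in> G \<Longrightarrow> (\<lambda>t. h t * k t) \<in> G"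
    and "g \<in> G" "g' \<in> G"
  shows "annihilated_commutator_sum (UNIV :: 'n set)
           (\<phi> (simple_tensor (\<lambda>t. g t * g t * g' t * g t) (E (mat 1))))"
proof -
  define \<Psi> where "\<Psi> h A = \<phi> (simple_tensor h (E A))" for h A
  define \<alpha> where "\<alpha> = (\<lambda>t. g t * g t * g' t * g t)"
  have \<Psi>_mult: "\<Psi> h A * \<Psi> k B = \<Psi> (\<lambda>t. h t * k t) (A ** B)" if "h \<in> G" "k \<in> G" for h k A B
    using that by (simp add: \<Psi>_def mult[symmetric] G_Z23 simple_tensor_mult E_mult)
  have \<Psi>_zero: "\<Psi> h 0 = 0" for h
    by (simp add: \<Psi>_def additive.zero[OF E_additive] simple_tensor_zero zero)
  have "\<alpha> \<in> G"
    unfolding \<alpha>_def using assms(6,7) by (intro G_mult)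
  then have \<Psi>_additive: "Modules.additive (\<Psi> \<alpha>)"
    by unfold_locales
      (simp add: \<Psi>_def G_Z23 add[symmetric] simple_tensor_add additive.add[OF E_additive])
  obtain \<sigma> :: "'n \<Rightarrow> 'n" where \<sigma>: "\<And>r. \<sigma> r \<noteq> r"
    using ex_fixpoint_free_fun[OF assms(1)] by blast
  define u where "u r = \<Psi> g (matrix_unit r r)" for r
  define v where "v r = \<Psi> g (matrix_unit r (\<sigma> r))" for r
  define w where "w r = \<Psi> g' (matrix_unit (\<sigma> r) r)" for r
  have vu: "v r * u r = 0" for r
    using \<sigma>[of r] by (simp add: u_def v_def \<Psi>_mult \<open>g \<in> G\<close> matrix_unit_mult \<Psi>_zero)
  then have commutator_uv: "commutator (u r) (v r) = u r * v r" for r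
    by (rule commutator_eq_mult_if_mult_eq_zero)
  have annihilated: "commutator (u r) (v r) * u r = 0" for r
    by (simp add: commutator_uv mult.assoc vu)
  have summand: "commutator (u r) (v r) * w r * u r = \<Psi> \<alpha> (matrix_unit r r)" for r
  proof -
    have "commutator (u r) (v r) * w r * u r = u r * v r * w r * u r"
      by (simp add: commutator_uv)
    also have "\<dots> = \<Psi> \<alpha> (matrix_unit r r)"
      using \<sigma>[of r] assms(6,7)
      by (simp add: u_def v_def w_def \<Psi>_mult G_mult matrix_unit_mult \<alpha>_def)
    finally show ?thesis .
  qed
  have diagonal:
    "\<phi> (simple_tensor \<alpha> (E (mat 1))) = (\<Sum>r\<in>UNIV. \<Psi> \<alpha> (matrix_unit r r))"
    by (simp only: \<Psi>_def[symmetric] additive.sum[OF \<Psi>_additive, symmetric]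
        sum_matrix_unit_diag)
  show ?thesis
    unfolding annihilated_commutator_sum_def \<alpha>_def[symmetric]
    by (rule exI[of _ u], rule exI[of _ v], rule exI[of _ w], rule exI[of _ u])
      (simp add: annihilated summand diagonal)
qed

lemma annihilated_commutator_sum_one:
  "annihilated_commutator_sum (UNIV <+> UNIV :: (2 + 3) set) (1::'a)"
proof -
  \<comment> \<open>With p(t) = sum_{k<4} binom(3+k, k) t^k one has (1 - t)^4 p(t) + t^4 p(1 - t) = 1.\<close>
  define p :: "real \<Rightarrow> real" where "p t = 1 + 4 * t + 10 * t^2 + 20 * t^3" for t
  define \<alpha> :: "real \<Rightarrow> real" where "\<alpha> = (\<lambda>t. (1 - t) * (1 - t) * ((1 - t) * p t) * (1 - t))"
  define \<beta> :: "real \<Rightarrow> real" where "\<beta> = (\<lambda>t. t * t * (t * p (1 - t)) * t)"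
  have left: "annihilated_commutator_sum (UNIV :: 2 set)
      (\<phi> (simple_tensor \<alpha> (kron (mat 1) (mat 1))))"
    unfolding \<alpha>_def
    by (rule annihilated_commutator_sum_corner[where E = "\<lambda>a. kron a (mat 1)"
          and G = "{g. continuous_on {0..1} g \<and> g 1 = 0}" and g = "\<lambda>t. 1 - t"])
      (auto simp: kron_mult additive_kron_left p_def intro!: simple_tensor_kron_left_in_Z23
        continuous_intros)
  have right: "annihilated_commutator_sum (UNIV :: 3 set)
      (\<phi> (simple_tensor \<beta> (kron (mat 1) (mat 1))))"
    unfolding \<beta>_def
    by (rule annihilated_commutator_sum_corner[where E = "kron (mat 1)"
          and G = "{g. continuous_on {0..1} g \<and> g 0 = 0}" and g = "\<lambda>t. t"])
      (auto simp: kron_mult additive_kron_right p_def intro!: simple_tensor_kron_right_in_Z23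
        continuous_intros)
  have partition: "(\<lambda>t. \<alpha> t + \<beta> t) = (\<lambda>t. 1)"
    unfolding \<alpha>_def \<beta>_def p_def by (rule ext) algebra
  have "simple_tensor \<alpha> (kron (mat 1) (mat 1)) \<in> Z23"
    unfolding \<alpha>_def p_def by (auto intro!: simple_tensor_kron_left_in_Z23 continuous_intros)
  moreover have "simple_tensor \<beta> (kron (mat 1) (mat 1)) \<in> Z23"
    unfolding \<beta>_def p_def by (auto intro!: simple_tensor_kron_right_in_Z23 continuous_intros)
  ultimately have "\<phi> (simple_tensor \<alpha> (kron (mat 1) (mat 1)))
      + \<phi> (simple_tensor \<beta> (kron (mat 1) (mat 1)))
      = \<phi> (simple_tensor (\<lambda>t. \<alpha> t + \<beta> t) (kron (mat 1) (mat 1)))"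
    by (simp add: add[symmetric] simple_tensor_add_fun)
  also have "\<dots> = 1"
    by (simp add: partition kron_one Z23_one_eq_simple_tensor[symmetric] one)
  finally show ?thesis
    using annihilated_commutator_sum_Plus[OF finite finite left right] by simp
qed

end

theorem theorem6p4:
  fixes \<phi> :: "(real \<Rightarrow> mat6) \<Rightarrow> 'a::unital_cstar_algebra"
  assumes "unital_star_hom_Z23 \<phi>"
  shows "(\<exists>N. \<forall>a::'a. sum_of_comm_prods N a) \<and> xi TYPE('a) \<le> 6"
proof -
  interpret unital_Z23_hom \<phi>
    by (rule unital_Z23_hom.intro) (rule assms)
  have five: "\<forall>a::'a. sum_of_comm_prods 5 a"
    using sum_of_comm_prods_card[OF _ annihilated_commutator_sum_one] by (simp add: card_Plus)
  then have "xi TYPE('a) \<le> 5"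
    unfolding xi_def by (rule Least_le)
  with five show ?thesis
    by auto
qed

end
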